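(* Let $P=\{p_1,\dots,p_n\}$ be weighted points in $\mathbb{R}^2$ with total weight $1$, let $S=\{s_1,\dots,s_m\}$ be triangles in $\mathbb{R}^2$ of total area $1$ with longest edge length $\Delta$, let $\delta>0$, and let $Q$ be the set of cells produced by the subdivision described in the context. Then $|Q|=O\!\left(\frac{nm}{\delta^2}\log\frac{nm\Delta}{\delta}\right)$.
   Context: Subdivision: overlay a uniform grid of $\Delta\times\Delta$ square cells and keep the cells that intersect a triangle of $S$. Recursively process each cell: if there is a point of $P$ such that the whole cell lies within Euclidean distance $\delta/\sqrt{nm}$ of it, stop; otherwise, if for some point of $P$ the ratio of the distances to the furthest and closest point of the cell exceeds $1+\delta$, split the cell into four equal squares and recurse; otherwise stop. $Q$ is the set of resulting cells. *)

theory Defs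
  imports "HOL-Analysis.Analysis"
begin

type_synonym pt = "real \<times> real"

definition cell :: "pt \<Rightarrow> real \<Rightarrow> pt set" where
  "cell c r = cbox c (c + (r, r))"

definition triangle :: "pt \<times> pt \<times> pt \<Rightarrow> pt set" where
  "triangle t = (case t of (a, b, c) \<Rightarrow> convex hull {a, b, c})"

definition tri_area :: "pt \<times> pt \<times> pt \<Rightarrow> real" where
  "tri_area t = measure lborel (triangle t)"

definition edge_lengths :: "pt \<times> pt \<times> pt \<Rightarrow> real set" where
  "edge_lengths t = (case t of (a, b, c) \<Rightarrow> {dist a b, dist b c, dist c a})"

definition close_stop :: "pt set \<Rightarrow> real \<Rightarrow> pt set \<Rightarrow> bool" where
  "close_stop P rho C \<longleftrightarrow> (\<exists>p\<in>P. C \<subseteq> cball p rho)"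

definition ratio_split :: "pt set \<Rightarrow> real \<Rightarrow> pt set \<Rightarrow> bool" where
  "ratio_split P \<delta> C \<longleftrightarrow>
     (\<exists>p\<in>P. Sup (dist p ` C) > (1 + \<delta>) * Inf (dist p ` C))"

definition splits :: "pt set \<Rightarrow> real \<Rightarrow> real \<Rightarrow> pt set \<Rightarrow> bool" where
  "splits P rho \<delta> C \<longleftrightarrow> \<not> close_stop P rho C \<and> ratio_split P \<delta> C"

inductive_set visited :: "pt set \<Rightarrow> real \<Rightarrow> real \<Rightarrow> (pt \<times> real) set \<Rightarrow> (pt \<times> real) set"
  for P rho \<delta> G where
  base: "x \<in> G \<Longrightarrow> x \<in> visited P rho \<delta> G"
| child: "(c, r) \<in> visited P rho \<delta> G \<Longrightarrow> splits P rho \<delta> (cell c r) \<Longrightarrow>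
          d \<in> {c, c + (r/2, 0), c + (0, r/2), c + (r/2, r/2)} \<Longrightarrow>
          (d, r/2) \<in> visited P rho \<delta> G"

definition grid_cells :: "pt \<Rightarrow> real \<Rightarrow> (pt \<times> pt \<times> pt) set \<Rightarrow> (pt \<times> real) set" where
  "grid_cells z \<Delta> S = {(z + (of_int i * \<Delta>, of_int j * \<Delta>), \<Delta>) | i j.
      \<exists>t\<in>S. cell (z + (of_int i * \<Delta>, of_int j * \<Delta>)) \<Delta> \<inter> triangle t \<noteq> {}}"

definition subdivision :: "pt set \<Rightarrow> (pt \<times> pt \<times> pt) set \<Rightarrow> pt \<Rightarrow> real \<Rightarrow> real \<Rightarrow> real \<Rightarrow> pt set set" where
  "subdivision P S z \<Delta> rho \<delta> =
     {cell c r | c r. (c, r) \<in> visited P rho \<delta> (grid_cells z \<Delta> S) \<and> \<not> splits P rho \<delta> (cell c r)}"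

end

theory Submission
  imports Defs
begin

(* A cell of side r that splits has a point p of P with every point of the cell closer to p
   than 4r/delta: the ratio test forces the distance from p to the cell below 2r/delta, and the
   cell has diameter at most 2r. Since the cell is not within rho of p, also rho < 4r/delta.
   All visited cells are cells of the dyadic refinements of the Delta-grid, so on the level of
   side r each point of P accounts for O(1/delta^2) splitting cells, and only the
   O(log (Delta/(rho delta))) levels with r > rho delta/4 contain any. A leaf is either a grid cell
   meeting a triangle (O(m) of them, as each triangle has diameter at most Delta) or a quadrant of
   a splitting cell. Finally, total area 1 forces m Delta^2 >= 2, which bounds that logarithm by
   O(ln (nm Delta/delta)) for rho = delta/sqrt(nm). *)

section \<open>Area of a triangle\<close>

(* content_triangle is stated for real^2 only, so the area of a triangle in real * real is
   computed by transporting Lebesgue measure along the coordinate isomorphism. *)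
definition vec_of_pt :: "pt \<Rightarrow> real^2" where
  "vec_of_pt x = vector [fst x, snd x]"

definition pt_of_vec :: "real^2 \<Rightarrow> pt" where
  "pt_of_vec v = (v$1, v$2)"

lemma pt_of_vec_of_pt [simp]: "pt_of_vec (vec_of_pt x) = x"
  by (simp add: pt_of_vec_def vec_of_pt_def)

lemma vec_of_pt_of_vec [simp]: "vec_of_pt (pt_of_vec v) = v"
  by (simp add: pt_of_vec_def vec_of_pt_def vec_eq_iff forall_2)

lemma linear_vec_of_pt: "linear vec_of_pt"
  by (rule linearI) (auto simp: vec_of_pt_def vec_eq_iff forall_2)

lemma pt_of_vec_measurable [measurable]: "pt_of_vec \<in> borel_measurable borel"
  unfolding pt_of_vec_def by (intro borel_measurable_continuous_onI continuous_intros)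

lemma lborel_pt_eq_distr: "(lborel :: pt measure) = distr lborel borel pt_of_vec"
proof (rule lborel_eqI)
  fix l u :: pt
  assume le: "\<And>b. b \<in> Basis \<Longrightarrow> l \<bullet> b \<le> u \<bullet> b"
  obtain l1 l2 u1 u2 where lu: "l = (l1, l2)" "u = (u1, u2)" by (cases l, cases u)
  have "l1 \<le> u1" "l2 \<le> u2"
    using le[of "(1, 0)"] le[of "(0, 1)"] by (auto simp: lu Basis_prod_def)
  have "pt_of_vec -` box l u = box (vec_of_pt l) (vec_of_pt u)"
    by (auto simp: lu mem_box_cart pt_of_vec_def vec_of_pt_def mem_box Basis_prod_def forall_2)
  then have "emeasure (distr lborel borel pt_of_vec) (box l u)
      = emeasure lborel (box (vec_of_pt l) (vec_of_pt u))"
    by (simp add: emeasure_distr)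
  also have "\<dots> = ennreal ((u1 - l1) * (u2 - l2))"
  proof -
    have Basis: "(Basis :: (real^2) set) = {axis 1 1, axis 2 1}"
      by (auto simp: Basis_vec_def) (metis exhaust_2)
    show ?thesis
      using \<open>l1 \<le> u1\<close> \<open>l2 \<le> u2\<close>
      by (simp add: emeasure_lborel_box_eq Basis axis_eq_axis lu vec_of_pt_def inner_axis)
  qed
  also have "(u1 - l1) * (u2 - l2) = (\<Prod>b\<in>Basis. (u - l) \<bullet> b)"
    by (simp add: Basis_prod_def lu prod.union_disjoint)
  finally show "emeasure (distr lborel borel pt_of_vec) (box l u) = (\<Prod>b\<in>Basis. (u - l) \<bullet> b)" .
qed simp

lemma tri_area_eq:
  "tri_area (a, b, c) =
     \<bar>(fst c - fst a) * (snd b - snd a) - (fst b - fst a) * (snd c - snd a)\<bar> / 2"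
proof -
  let ?T = "convex hull {a, b, c}"
  have "?T \<in> sets borel"
    by (intro borel_compact finite_imp_compact_convex_hull) auto
  have "tri_area (a, b, c) = measure (distr lborel borel pt_of_vec) ?T"
    by (simp add: tri_area_def triangle_def flip: lborel_pt_eq_distr)
  also have "\<dots> = measure lborel (pt_of_vec -` ?T)"
    using \<open>?T \<in> sets borel\<close> by (simp add: measure_distr)
  also have "pt_of_vec -` ?T = vec_of_pt ` ?T"
    by (auto simp: image_iff) (metis vec_of_pt_of_vec)
  also have "\<dots> = convex hull {vec_of_pt a, vec_of_pt b, vec_of_pt c}"
    by (simp add: convex_hull_linear_image linear_vec_of_pt)
  finally show ?thesis
    by (simp add: content_triangle vec_of_pt_def)
qed

lemma abs_cross_le_norm_mult:
  fixes u v :: pt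
  shows "\<bar>fst u * snd v - snd u * fst v\<bar> \<le> norm u * norm v"
proof (rule power2_le_imp_le)
  have "(norm u * norm v)\<^sup>2 = (fst u * snd v - snd u * fst v)\<^sup>2 + (u \<bullet> v)\<^sup>2"
    by (cases u, cases v) (simp add: power_mult_distrib norm_Pair power2_eq_square algebra_simps)
  then show "\<bar>fst u * snd v - snd u * fst v\<bar>\<^sup>2 \<le> (norm u * norm v)\<^sup>2"
    by simp
qed simp

lemma tri_area_le: "tri_area (a, b, c) \<le> dist a b * dist a c / 2"
  using abs_cross_le_norm_mult[of "c - a" "b - a"]
  by (simp add: tri_area_eq dist_norm norm_minus_commute mult.commute)

lemma tri_area_le_longest_edge:
  assumes "\<forall>e\<in>edge_lengths t. e \<le> D"
  shows "tri_area t \<le> D\<^sup>2 / 2"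
proof -
  obtain a b c where t: "t = (a, b, c)" by (cases t)
  have "dist a b \<le> D" "dist a c \<le> D"
    using assms by (auto simp: t edge_lengths_def dist_commute)
  then have "dist a b * dist a c \<le> D * D"
    by (intro mult_mono) (auto intro: order_trans[OF zero_le_dist])
  then show ?thesis
    using tri_area_le[of a b c] by (simp add: t power2_eq_square)
qed

lemma triangle_subset_cball:
  assumes "\<forall>e\<in>edge_lengths (a, b, c). e \<le> D"
  shows "triangle (a, b, c) \<subseteq> cball a D"
proof -
  have "{a, b, c} \<subseteq> cball a D"
    using assms by (auto simp: edge_lengths_def dist_commute intro: order_trans[OF zero_le_dist])
  then show ?thesis
    unfolding triangle_def by (simp add: hull_minimal)
qed

lemma triangles_longest_edge:
  fixes s :: "nat \<Rightarrow> pt \<times> pt \<times> pt"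
  assumes area: "(\<Sum>k<m. tri_area (s k)) = 1" and \<Delta>: "\<Delta> = Max (\<Union>k<m. edge_lengths (s k))"
  shows "\<forall>t\<in>s ` {..<m}. \<forall>e\<in>edge_lengths t. e \<le> \<Delta>" and "2 \<le> real m * \<Delta>\<^sup>2" and "0 < \<Delta>"
proof -
  have "finite (\<Union>k<m. edge_lengths (s k))"
    by (auto simp: edge_lengths_def split: prod.splits)
  then show edges: "\<forall>t\<in>s ` {..<m}. \<forall>e\<in>edge_lengths t. e \<le> \<Delta>"
    by (auto simp: \<Delta> intro: Max_ge)
  have "1 \<le> (\<Sum>k<m. \<Delta>\<^sup>2 / 2)"
    unfolding area[symmetric] using edges by (intro sum_mono tri_area_le_longest_edge) auto
  then show "2 \<le> real m * \<Delta>\<^sup>2"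
    by simp
  have "0 < m"
    using area by (cases m) auto
  obtain a b c where "s 0 = (a, b, c)"
    by (cases "s 0")
  then have "dist a b \<in> edge_lengths (s 0)"
    by (simp add: edge_lengths_def)
  with edges \<open>0 < m\<close> have "dist a b \<le> \<Delta>"
    by (meson imageI lessThan_iff)
  then have "0 \<le> \<Delta>"
    using zero_le_dist[of a b] by linarith
  with \<open>2 \<le> real m * \<Delta>\<^sup>2\<close> show "0 < \<Delta>"
    by (cases "\<Delta> = 0") auto
qed

section \<open>Cells and the splitting test\<close>

lemma mem_cell:
  "x \<in> cell c r \<longleftrightarrow> fst c \<le> fst x \<and> fst x \<le> fst c + r \<and> snd c \<le> snd x \<and> snd x \<le> snd c + r"
  by (cases x, cases c) (auto simp: cell_def cbox_Pair_eq)

lemma corner_in_cell: "0 \<le> r \<Longrightarrow> c \<in> cell c r"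
  by (simp add: mem_cell)

lemma dist_le_in_cell:
  assumes "x \<in> cell c r" "y \<in> cell c r"
  shows "dist x y \<le> 2 * r"
proof -
  have "dist x y \<le> \<bar>fst x - fst y\<bar> + \<bar>snd x - snd y\<bar>"
    by (cases x, cases y) (simp add: dist_Pair_Pair dist_real_def sqrt_sum_squares_le_sum_abs)
  with assms show ?thesis
    by (auto simp: mem_cell abs_le_iff)
qed

lemma dist_le_Inf_dist_cell:
  assumes "x \<in> cell c r"
  shows "dist p x \<le> Inf (dist p ` cell c r) + 2 * r"
proof -
  have "dist p x - 2 * r \<le> Inf (dist p ` cell c r)"
  proof (rule cInf_greatest)
    show "dist p ` cell c r \<noteq> {}"
      using assms by blast
  next
    fix v
    assume "v \<in> dist p ` cell c r"
    then obtain y where y: "y \<in> cell c r" "v = dist p y"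
      by blast
    with assms show "dist p x - 2 * r \<le> v"
      using dist_triangle[of p x y] dist_le_in_cell[of y c r x] by (simp add: dist_commute)
  qed
  then show ?thesis
    by simp
qed

lemma splitting_cell_near_point:
  assumes "splits P \<rho> \<delta> (cell c r)" "0 \<le> r" "0 < \<delta>" "\<delta> \<le> 1"
  shows "\<exists>p\<in>P. cell c r \<subseteq> ball p (4 * r / \<delta>) \<and> \<rho> < 4 * r / \<delta>"
proof -
  obtain p where "p \<in> P" and far: "\<not> cell c r \<subseteq> cball p \<rho>"
    and ratio: "(1 + \<delta>) * Inf (dist p ` cell c r) < Sup (dist p ` cell c r)"
    using assms(1) by (auto simp: splits_def ratio_split_def close_stop_def)
  define I where "I = Inf (dist p ` cell c r)"
  have near: "dist p x \<le> I + 2 * r" if "x \<in> cell c r" for x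
    unfolding I_def using that by (rule dist_le_Inf_dist_cell)
  have "dist p ` cell c r \<noteq> {}"
    using corner_in_cell[OF assms(2)] by blast
  then have "Sup (dist p ` cell c r) \<le> I + 2 * r"
    using near by (intro cSup_least) auto
  with ratio have "\<delta> * I < 2 * r"
    by (simp add: I_def algebra_simps)
  moreover have "2 * r \<le> 2 * r / \<delta>"
    using assms(2-4) by (simp add: field_simps mult_left_le_one_le)
  ultimately have "I + 2 * r < 4 * r / \<delta>"
    using assms(3) by (simp add: field_simps)
  with near have sub: "cell c r \<subseteq> ball p (4 * r / \<delta>)"
    by (meson mem_ball order.strict_trans1 subsetI)
  have "\<rho> < 4 * r / \<delta>"
  proof (rule ccontr)
    assume "\<not> \<rho> < 4 * r / \<delta>"
    then have "ball p (4 * r / \<delta>) \<subseteq> cball p \<rho>"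
      by (auto simp: subset_iff)
    with sub far show False
      by blast
  qed
  with sub \<open>p \<in> P\<close> show ?thesis
    by blast
qed

section \<open>Counting lattice points\<close>

lemma card_int_multiples_near:
  fixes a r R :: real
  assumes "0 < r" "0 \<le> R"
  shows "finite {i::int. \<bar>a + r * of_int i\<bar> \<le> R}"
    and "real (card {i::int. \<bar>a + r * of_int i\<bar> \<le> R}) \<le> 2 * R / r + 1"
proof -
  define lo where "lo = (- R - a) / r"
  define hi where "hi = (R - a) / r"
  have sub: "{i::int. \<bar>a + r * of_int i\<bar> \<le> R} \<subseteq> {\<lceil>lo\<rceil>..\<lfloor>hi\<rfloor>}"
    using assms(1) by (auto simp: lo_def hi_def abs_le_iff ceiling_le_iff le_floor_iff field_simps)
  then show "finite {i::int. \<bar>a + r * of_int i\<bar> \<le> R}"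
    using finite_subset by blast
  then have "card {i::int. \<bar>a + r * of_int i\<bar> \<le> R} \<le> nat (\<lfloor>hi\<rfloor> - \<lceil>lo\<rceil> + 1)"
    using card_mono[OF _ sub] by simp
  moreover have "real (nat (\<lfloor>hi\<rfloor> - \<lceil>lo\<rceil> + 1)) \<le> max 0 (hi - lo + 1)"
  proof -
    have "real_of_int (\<lfloor>hi\<rfloor> - \<lceil>lo\<rceil> + 1) \<le> hi - lo + 1"
      using of_int_floor_le[of hi] le_of_int_ceiling[of lo] by linarith
    then show ?thesis
      by (cases "0 \<le> \<lfloor>hi\<rfloor> - \<lceil>lo\<rceil> + 1") auto
  qed
  moreover have "hi - lo = 2 * R / r" "0 \<le> 2 * R / r"
    using assms by (simp_all add: hi_def lo_def field_simps)
  ultimately show "real (card {i::int. \<bar>a + r * of_int i\<bar> \<le> R}) \<le> 2 * R / r + 1"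
    by linarith
qed

definition grid_corner :: "pt \<Rightarrow> real \<Rightarrow> int \<times> int \<Rightarrow> pt" where
  "grid_corner z r ij = z + (r * of_int (fst ij), r * of_int (snd ij))"

definition corners_near :: "pt \<Rightarrow> real \<Rightarrow> pt \<Rightarrow> real \<Rightarrow> (int \<times> int) set" where
  "corners_near z r q R = {ij. dist (grid_corner z r ij) q \<le> R}"

lemma card_corners_near:
  assumes "0 < r" "0 \<le> R"
  shows "finite (corners_near z r q R)" and "real (card (corners_near z r q R)) \<le> (2 * R / r + 1)\<^sup>2"
proof -
  define I where "I = {i::int. \<bar>(fst z - fst q) + r * of_int i\<bar> \<le> R}"
  define J where "J = {j::int. \<bar>(snd z - snd q) + r * of_int j\<bar> \<le> R}"
  have sub: "corners_near z r q R \<subseteq> I \<times> J"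
  proof clarify
    fix i j assume "(i, j) \<in> corners_near z r q R"
    then show "i \<in> I \<and> j \<in> J"
      using dist_fst_le[of "grid_corner z r (i, j)" q] dist_snd_le[of "grid_corner z r (i, j)" q]
      by (simp add: corners_near_def I_def J_def grid_corner_def dist_real_def algebra_simps)
  qed
  have I: "finite I" "real (card I) \<le> 2 * R / r + 1"
    and J: "finite J" "real (card J) \<le> 2 * R / r + 1"
    unfolding I_def J_def using card_int_multiples_near[OF assms] by blast+
  show "finite (corners_near z r q R)"
    using sub I(1) J(1) finite_subset by blast
  then have "real (card (corners_near z r q R)) \<le> real (card I) * real (card J)"
    using card_mono[OF _ sub] I(1) J(1) by (simp add: card_cartesian_product flip: of_nat_mult)
  also have "\<dots> \<le> (2 * R / r + 1)\<^sup>2"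
    unfolding power2_eq_square using I(2) J(2) by (intro mult_mono) auto
  finally show "real (card (corners_near z r q R)) \<le> (2 * R / r + 1)\<^sup>2" .
qed

lemma pow2_less_eq_lessThan:
  assumes "0 < Y"
  shows "{k::nat. 2 ^ k < Y} = {..<nat \<lceil>log 2 Y\<rceil>}"
proof -
  have "2 ^ k < Y \<longleftrightarrow> k < nat \<lceil>log 2 Y\<rceil>" for k :: nat
    using less_log_iff[of 2 Y "real k"] assms by (simp add: powr_realpow zless_nat_eq_int_zless less_ceiling_iff)
  then show ?thesis by auto
qed

section \<open>Dyadic structure of the subdivision\<close>

definition dyadic_cell :: "pt \<Rightarrow> real \<Rightarrow> nat \<Rightarrow> int \<times> int \<Rightarrow> pt \<times> real" where
  "dyadic_cell z \<Delta> k ij = (grid_corner z (\<Delta> / 2 ^ k) ij, \<Delta> / 2 ^ k)"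

lemma grid_cells_eq:
  "grid_cells z \<Delta> S =
     {dyadic_cell z \<Delta> 0 (i, j) | i j. \<exists>t\<in>S. cell (grid_corner z \<Delta> (i, j)) \<Delta> \<inter> triangle t \<noteq> {}}"
  by (simp add: grid_cells_def dyadic_cell_def grid_corner_def mult.commute)

lemma visited_dyadic:
  assumes "x \<in> visited P \<rho> \<delta> (grid_cells z \<Delta> S)"
  shows "\<exists>k ij. x = dyadic_cell z \<Delta> k ij"
  using assms
proof induction
  case (base x)
  then show ?case
    by (auto simp: grid_cells_eq)
next
  case (child c r d)
  then obtain k i j where "(c, r) = dyadic_cell z \<Delta> k (i, j)"
    by auto
  then have r: "r = \<Delta> / 2 ^ k" and c: "c = z + (r * of_int i, r * of_int j)"
    by (simp_all add: dyadic_cell_def grid_corner_def)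
  have "c = grid_corner z (r / 2) (2 * i, 2 * j)"
    "c + (r / 2, 0) = grid_corner z (r / 2) (2 * i + 1, 2 * j)"
    "c + (0, r / 2) = grid_corner z (r / 2) (2 * i, 2 * j + 1)"
    "c + (r / 2, r / 2) = grid_corner z (r / 2) (2 * i + 1, 2 * j + 1)"
    by (simp_all add: c grid_corner_def algebra_simps)
  with child.hyps(3) obtain ij where "d = grid_corner z (r / 2) ij"
    by blast
  then have "(d, r / 2) = dyadic_cell z \<Delta> (Suc k) ij"
    by (simp add: dyadic_cell_def r mult.commute)
  then show ?case
    by blast
qed

fun quadrants :: "pt \<times> real \<Rightarrow> (pt \<times> real) set" where
  "quadrants (c, r) = (\<lambda>d. (d, r / 2)) ` {c, c + (r / 2, 0), c + (0, r / 2), c + (r / 2, r / 2)}"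

definition splitting_cells :: "pt set \<Rightarrow> real \<Rightarrow> real \<Rightarrow> (pt \<times> real) set \<Rightarrow> (pt \<times> real) set" where
  "splitting_cells P \<rho> \<delta> G = {(c, r) \<in> visited P \<rho> \<delta> G. splits P \<rho> \<delta> (cell c r)}"

lemma visited_subset_quadrants:
  "visited P \<rho> \<delta> G \<subseteq> G \<union> \<Union>(quadrants ` splitting_cells P \<rho> \<delta> G)"
proof
  fix x
  assume "x \<in> visited P \<rho> \<delta> G"
  then show "x \<in> G \<union> \<Union>(quadrants ` splitting_cells P \<rho> \<delta> G)"
  proof induction
    case (child c r d)
    then have "(c, r) \<in> splitting_cells P \<rho> \<delta> G" "(d, r / 2) \<in> quadrants (c, r)"
      by (auto simp: splitting_cells_def)
    then show ?case
      by blast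
  qed simp
qed

lemma finite_quadrants: "finite (quadrants x)"
  by (cases x) simp

lemma card_quadrants_le: "card (quadrants x) \<le> 4"
proof -
  obtain c r where "x = (c, r)"
    by (cases x)
  have "card {c, c + (r / 2, 0), c + (0, r / 2), c + (r / 2, r / 2)} \<le> 4"
    by (rule card_insert_le_m1, simp)+ simp
  then show ?thesis
    using card_image_le[of "{c, c + (r / 2, 0), c + (0, r / 2), c + (r / 2, r / 2)}" "\<lambda>d. (d, r / 2)"]
    by (simp add: \<open>x = (c, r)\<close>)
qed

lemma card_visited_le:
  assumes "finite G" "finite (splitting_cells P \<rho> \<delta> G)"
  shows "finite (visited P \<rho> \<delta> G)"
    and "card (visited P \<rho> \<delta> G) \<le> card G + 4 * card (splitting_cells P \<rho> \<delta> G)"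
proof -
  let ?Q = "\<Union>(quadrants ` splitting_cells P \<rho> \<delta> G)"
  have "finite (G \<union> ?Q)"
    using assms by (simp add: finite_quadrants)
  then show "finite (visited P \<rho> \<delta> G)"
    by (rule finite_subset[OF visited_subset_quadrants])
  have "card (visited P \<rho> \<delta> G) \<le> card (G \<union> ?Q)"
    by (rule card_mono[OF \<open>finite (G \<union> ?Q)\<close> visited_subset_quadrants])
  also have "\<dots> \<le> card G + card ?Q"
    by (rule card_Un_le)
  also have "card ?Q \<le> (\<Sum>x\<in>splitting_cells P \<rho> \<delta> G. card (quadrants x))"
    by (rule card_UN_le[OF assms(2)])
  also have "\<dots> \<le> (\<Sum>x\<in>splitting_cells P \<rho> \<delta> G. 4)"
    by (intro sum_mono card_quadrants_le)
  finally show "card (visited P \<rho> \<delta> G) \<le> card G + 4 * card (splitting_cells P \<rho> \<delta> G)"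
    by (simp add: mult.commute)
qed

lemma card_subdivision_le_visited:
  assumes "finite (visited P \<rho> \<delta> (grid_cells z \<Delta> S))"
  shows "finite (subdivision P S z \<Delta> \<rho> \<delta>)"
    and "card (subdivision P S z \<Delta> \<rho> \<delta>) \<le> card (visited P \<rho> \<delta> (grid_cells z \<Delta> S))"
proof -
  have sub: "subdivision P S z \<Delta> \<rho> \<delta> \<subseteq> (\<lambda>(c, r). cell c r) ` visited P \<rho> \<delta> (grid_cells z \<Delta> S)"
    by (auto simp: subdivision_def intro: rev_image_eqI)
  then show "finite (subdivision P S z \<Delta> \<rho> \<delta>)"
    by (rule finite_subset[OF _ finite_imageI[OF assms]])
  have "card (subdivision P S z \<Delta> \<rho> \<delta>) \<le> card ((\<lambda>(c, r). cell c r) ` visited P \<rho> \<delta> (grid_cells z \<Delta> S))"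
    by (rule card_mono[OF finite_imageI[OF assms] sub])
  also have "\<dots> \<le> card (visited P \<rho> \<delta> (grid_cells z \<Delta> S))"
    by (rule card_image_le[OF assms])
  finally show "card (subdivision P S z \<Delta> \<rho> \<delta>) \<le> card (visited P \<rho> \<delta> (grid_cells z \<Delta> S))" .
qed

section \<open>Counting the cells\<close>

lemma card_grid_cells_le:
  assumes "0 < \<Delta>" "finite S" "\<forall>t\<in>S. \<forall>e\<in>edge_lengths t. e \<le> \<Delta>"
  shows "finite (grid_cells z \<Delta> S)" and "card (grid_cells z \<Delta> S) \<le> 49 * card S"
proof -
  define near where "near t = corners_near z \<Delta> (fst t) (3 * \<Delta>)" for t :: "pt \<times> pt \<times> pt"
  have near: "finite (near t)" "card (near t) \<le> 49" for t
    using card_corners_near[of \<Delta> "3 * \<Delta>" z "fst t"] assms(1) by (simp_all add: near_def)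
  have sub: "grid_cells z \<Delta> S \<subseteq> (\<Union>t\<in>S. dyadic_cell z \<Delta> 0 ` near t)"
  proof
    fix x
    assume "x \<in> grid_cells z \<Delta> S"
    then obtain i j t y where x: "x = dyadic_cell z \<Delta> 0 (i, j)" and "t \<in> S"
      and y: "y \<in> cell (grid_corner z \<Delta> (i, j)) \<Delta>" "y \<in> triangle t"
      unfolding grid_cells_eq by blast
    obtain a b c where t: "t = (a, b, c)"
      by (cases t)
    have "dist a y \<le> \<Delta>"
      using triangle_subset_cball[of a b c \<Delta>] assms(3) \<open>t \<in> S\<close> y(2) by (auto simp: t)
    moreover have "dist (grid_corner z \<Delta> (i, j)) y \<le> 2 * \<Delta>"
      using y(1) corner_in_cell assms(1) by (intro dist_le_in_cell) auto
    ultimately have "(i, j) \<in> near t"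
      using dist_triangle[of "grid_corner z \<Delta> (i, j)" a y] by (simp add: near_def corners_near_def t dist_commute)
    with x \<open>t \<in> S\<close> show "x \<in> (\<Union>t\<in>S. dyadic_cell z \<Delta> 0 ` near t)"
      by blast
  qed
  have fin: "finite (\<Union>t\<in>S. dyadic_cell z \<Delta> 0 ` near t)"
    using assms(2) near(1) by blast
  then show "finite (grid_cells z \<Delta> S)"
    using sub finite_subset by blast
  have "card (grid_cells z \<Delta> S) \<le> (\<Sum>t\<in>S. card (dyadic_cell z \<Delta> 0 ` near t))"
    using card_mono[OF fin sub] card_UN_le[OF assms(2)] by (rule order_trans)
  also have "\<dots> \<le> (\<Sum>t\<in>S. 49)"
    using card_image_le[OF near(1)] near(2) by (intro sum_mono) (rule le_trans)
  finally show "card (grid_cells z \<Delta> S) \<le> 49 * card S"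
    by (simp add: mult.commute)
qed

lemma splitting_cells_subset:
  assumes "0 < \<delta>" "\<delta> \<le> 1" "0 < \<rho>" "0 < \<Delta>"
  shows "splitting_cells P \<rho> \<delta> (grid_cells z \<Delta> S) \<subseteq>
    (\<Union>p\<in>P. \<Union>k<nat \<lceil>log 2 (4 * \<Delta> / (\<rho> * \<delta>))\<rceil>.
       dyadic_cell z \<Delta> k ` corners_near z (\<Delta> / 2 ^ k) p (4 * (\<Delta> / 2 ^ k) / \<delta>))"
proof
  fix x
  assume "x \<in> splitting_cells P \<rho> \<delta> (grid_cells z \<Delta> S)"
  then have "x \<in> visited P \<rho> \<delta> (grid_cells z \<Delta> S)" and split: "splits P \<rho> \<delta> (cell (fst x) (snd x))"
    by (auto simp: splitting_cells_def)
  then obtain k ij where x: "x = dyadic_cell z \<Delta> k ij"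
    using visited_dyadic by blast
  define r where "r = \<Delta> / 2 ^ k"
  have "0 < r"
    using assms(4) by (simp add: r_def)
  obtain p where "p \<in> P" and ball: "cell (grid_corner z r ij) r \<subseteq> ball p (4 * r / \<delta>)"
    and "\<rho> < 4 * r / \<delta>"
    using splitting_cell_near_point[of P \<rho> \<delta> "grid_corner z r ij" r] split \<open>0 < r\<close> assms(1,2)
    by (auto simp: x dyadic_cell_def r_def)
  have "ij \<in> corners_near z r p (4 * r / \<delta>)"
    using ball corner_in_cell[of r "grid_corner z r ij"] \<open>0 < r\<close>
    by (auto simp: corners_near_def dist_commute)
  moreover have "2 ^ k < 4 * \<Delta> / (\<rho> * \<delta>)"
    using \<open>\<rho> < 4 * r / \<delta>\<close> assms by (simp add: r_def field_simps)
  then have "k < nat \<lceil>log 2 (4 * \<Delta> / (\<rho> * \<delta>))\<rceil>"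
    using pow2_less_eq_lessThan[of "4 * \<Delta> / (\<rho> * \<delta>)"] assms by auto
  ultimately show "x \<in> (\<Union>p\<in>P. \<Union>k<nat \<lceil>log 2 (4 * \<Delta> / (\<rho> * \<delta>))\<rceil>.
       dyadic_cell z \<Delta> k ` corners_near z (\<Delta> / 2 ^ k) p (4 * (\<Delta> / 2 ^ k) / \<delta>))"
    using x \<open>p \<in> P\<close> unfolding r_def by blast
qed

lemma card_splitting_cells_le:
  fixes z :: pt and S :: "(pt \<times> pt \<times> pt) set"
  assumes "finite P" "0 < \<delta>" "\<delta> \<le> 1" "0 < \<rho>" "0 < \<Delta>"
  defines "SC \<equiv> splitting_cells P \<rho> \<delta> (grid_cells z \<Delta> S)"
    and "levels \<equiv> nat \<lceil>log 2 (4 * \<Delta> / (\<rho> * \<delta>))\<rceil>"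
  shows "finite SC" and "real (card SC) \<le> real (card P) * real levels * (8 / \<delta> + 1)\<^sup>2"
proof -
  define near where "near p k = corners_near z (\<Delta> / 2 ^ k) p (4 * (\<Delta> / 2 ^ k) / \<delta>)" for p k
  have near: "finite (near p k)" "real (card (near p k)) \<le> (8 / \<delta> + 1)\<^sup>2" for p k
  proof -
    have "2 * (4 * (\<Delta> / 2 ^ k) / \<delta>) / (\<Delta> / 2 ^ k) = 8 / \<delta>"
      using assms(5) by simp
    then show "finite (near p k)" "real (card (near p k)) \<le> (8 / \<delta> + 1)\<^sup>2"
      using card_corners_near[of "\<Delta> / 2 ^ k" "4 * (\<Delta> / 2 ^ k) / \<delta>" z p] assms(2,5)
      by (simp_all add: near_def)
  qed
  have sub: "SC \<subseteq> (\<Union>p\<in>P. \<Union>k<levels. dyadic_cell z \<Delta> k ` near p k)"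
    unfolding SC_def levels_def near_def using assms(2-5) by (rule splitting_cells_subset)
  have fin: "finite (\<Union>p\<in>P. \<Union>k<levels. dyadic_cell z \<Delta> k ` near p k)"
    using assms(1) near(1) by blast
  then show "finite SC"
    using sub finite_subset by blast
  have "card SC \<le> card (\<Union>p\<in>P. \<Union>k<levels. dyadic_cell z \<Delta> k ` near p k)"
    by (rule card_mono[OF fin sub])
  also have "\<dots> \<le> (\<Sum>p\<in>P. card (\<Union>k<levels. dyadic_cell z \<Delta> k ` near p k))"
    by (rule card_UN_le[OF assms(1)])
  also have "\<dots> \<le> (\<Sum>p\<in>P. \<Sum>k<levels. card (dyadic_cell z \<Delta> k ` near p k))"
    by (intro sum_mono card_UN_le) simp
  also have "\<dots> \<le> (\<Sum>p\<in>P. \<Sum>k<levels. card (near p k))"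
    by (intro sum_mono card_image_le near(1))
  finally have "real (card SC) \<le> (\<Sum>p\<in>P. \<Sum>k<levels. real (card (near p k)))"
    by (simp flip: of_nat_sum)
  also have "\<dots> \<le> (\<Sum>p\<in>P. \<Sum>k<levels. (8 / \<delta> + 1)\<^sup>2)"
    using near(2) by (intro sum_mono)
  finally show "real (card SC) \<le> real (card P) * real levels * (8 / \<delta> + 1)\<^sup>2"
    by simp
qed

lemma card_subdivision_le:
  fixes z :: pt
  assumes "finite P" "finite S" "\<forall>t\<in>S. \<forall>e\<in>edge_lengths t. e \<le> \<Delta>"
    and "0 < \<delta>" "\<delta> \<le> 1" "0 < \<rho>" "0 < \<Delta>"
  shows "finite (subdivision P S z \<Delta> \<rho> \<delta>)"
    and "real (card (subdivision P S z \<Delta> \<rho> \<delta>)) \<le>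
           49 * real (card S) +
           4 * real (card P) * real (nat \<lceil>log 2 (4 * \<Delta> / (\<rho> * \<delta>))\<rceil>) * (8 / \<delta> + 1)\<^sup>2"
proof -
  note G = card_grid_cells_le[OF assms(7,2,3), of z]
  note SC = card_splitting_cells_le[OF assms(1,4,5,6,7), of z S]
  note V = card_visited_le[OF G(1) SC(1)]
  show "finite (subdivision P S z \<Delta> \<rho> \<delta>)"
    by (rule card_subdivision_le_visited(1)[OF V(1)])
  have "card (subdivision P S z \<Delta> \<rho> \<delta>) \<le> 49 * card S + 4 * card (splitting_cells P \<rho> \<delta> (grid_cells z \<Delta> S))"
    using card_subdivision_le_visited(2)[OF V(1)] V(2) G(2) by linarith
  then have "real (card (subdivision P S z \<Delta> \<rho> \<delta>)) \<le>
      real (49 * card S + 4 * card (splitting_cells P \<rho> \<delta> (grid_cells z \<Delta> S)))"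
    by (simp only: of_nat_le_iff)
  with SC(2) show "real (card (subdivision P S z \<Delta> \<rho> \<delta>)) \<le>
      49 * real (card S) +
      4 * real (card P) * real (nat \<lceil>log 2 (4 * \<Delta> / (\<rho> * \<delta>))\<rceil>) * (8 / \<delta> + 1)\<^sup>2"
    by linarith
qed

section \<open>The logarithmic estimate\<close>

lemma one_third_le_ln:
  assumes "sqrt 2 \<le> x"
  shows "1 / 3 \<le> ln x"
proof -
  have "ln (sqrt 2) \<le> ln x"
    using assms by (subst ln_le_cancel_iff) (auto intro: less_le_trans[of 0 "sqrt 2"])
  then show ?thesis
    using ln2_ge_two_thirds by (simp add: ln_sqrt)
qed

lemma nat_ceiling_log2_le_ln:
  fixes X Y :: real
  assumes "sqrt 2 \<le> X" "0 < Y" "Y \<le> 4 * X\<^sup>2"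
  shows "real (nat \<lceil>log 2 Y\<rceil>) \<le> 12 * ln X"
proof -
  have "0 < X"
    using assms(1) by (auto intro: less_le_trans[of 0 "sqrt 2"])
  have "ln Y \<le> ln (4 * X\<^sup>2)"
    by (subst ln_le_cancel_iff) (use assms(2,3) \<open>0 < X\<close> in auto)
  also have "\<dots> = 2 * ln 2 + 2 * ln X"
    using \<open>0 < X\<close> ln_realpow[of 2 2] by (simp add: ln_mult ln_realpow)
  finally have "log 2 Y \<le> (2 * ln 2 + 2 * ln X) / ln 2"
    unfolding log_def by (rule divide_right_mono) simp
  also have "\<dots> = 2 + 2 * (ln X / ln 2)"
    by (simp add: add_divide_distrib)
  finally have "log 2 Y \<le> 2 + 2 * (ln X / ln 2)" .
  moreover have "2 * (ln X / ln 2) \<le> 3 * ln X"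
    using ln2_ge_two_thirds one_third_le_ln[OF assms(1)] by (simp add: field_simps)
  moreover have "real (nat \<lceil>log 2 Y\<rceil>) \<le> max 0 (log 2 Y + 1)"
    by (cases "0 \<le> \<lceil>log 2 Y\<rceil>") (use ceiling_correct[of "log 2 Y"] in auto)
  ultimately show ?thesis
    using one_third_le_ln[OF assms(1)] by linarith
qed

lemma real_mult_nat_ge:
  fixes n m :: nat
  assumes "1 \<le> n" "1 \<le> m"
  shows "real m \<le> real (n * m)" "real n \<le> real (n * m)" "1 \<le> real (n * m)"
proof -
  have "m \<le> n * m" "n \<le> n * m" "1 \<le> n * m"
    using assms by simp_all
  then show "real m \<le> real (n * m)" "real n \<le> real (n * m)" "1 \<le> real (n * m)"
    by (simp_all del: of_nat_mult)
qed

lemma subdivision_scale_bounds: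
  fixes n m :: nat and \<Delta> \<delta> :: real
  assumes "1 \<le> n" "1 \<le> m" "0 < \<Delta>" "2 \<le> real m * \<Delta>\<^sup>2" "0 < \<delta>" "\<delta> \<le> 1"
  defines "N \<equiv> real (n * m)"
  shows "sqrt 2 \<le> N * \<Delta> / \<delta>" and "4 * \<Delta> / (\<delta> / sqrt N * \<delta>) \<le> 4 * (N * \<Delta> / \<delta>)\<^sup>2"
proof -
  note N = real_mult_nat_ge[OF assms(1,2), folded N_def]
  have "sqrt 2 \<le> real m * \<Delta>"
  proof (rule real_le_lsqrt)
    have "1 * 2 \<le> real m * (real m * \<Delta>\<^sup>2)"
      using assms(2,4) by (intro mult_mono) auto
    also have "\<dots> = (real m * \<Delta>)\<^sup>2"
      by (simp add: power2_eq_square algebra_simps)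
    finally show "2 \<le> (real m * \<Delta>)\<^sup>2"
      by simp
  qed (use assms(3) in simp)
  also have "\<dots> \<le> N * \<Delta>"
    using assms(3) by (intro mult_right_mono N(1)) simp
  finally have "sqrt 2 \<le> N * \<Delta>" .
  then have "1 \<le> N * \<Delta>"
    using real_sqrt_ge_one[of 2] by linarith
  have "N * \<Delta> \<le> N * \<Delta> / \<delta>"
    using assms(5,6) \<open>1 \<le> N * \<Delta>\<close> mult_right_le_one_le[of "N * \<Delta>" \<delta>] by (simp add: le_divide_eq)
  with \<open>sqrt 2 \<le> N * \<Delta>\<close> show "sqrt 2 \<le> N * \<Delta> / \<delta>"
    by linarith
  have "sqrt N \<le> N"
    using N(3) by (simp add: real_sqrt_le_iff' power2_eq_square)
  also have "\<dots> \<le> N * (N * \<Delta>)"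
    using N(3) \<open>1 \<le> N * \<Delta>\<close> by simp
  finally have "\<Delta> * sqrt N \<le> (N * \<Delta>)\<^sup>2"
    using assms(3) by (simp add: power2_eq_square algebra_simps)
  moreover have "4 * \<Delta> / (\<delta> / sqrt N * \<delta>) = 4 * (\<Delta> * sqrt N) / \<delta>\<^sup>2"
    using N(3) assms(5) by (simp add: power2_eq_square field_simps)
  ultimately show "4 * \<Delta> / (\<delta> / sqrt N * \<delta>) \<le> 4 * (N * \<Delta> / \<delta>)\<^sup>2"
    by (simp add: power_divide divide_right_mono)
qed

lemma subdivision_size_arith:
  fixes n m :: nat and \<Delta> \<delta> :: real
  assumes "1 \<le> n" "1 \<le> m" "0 < \<Delta>" "2 \<le> real m * \<Delta>\<^sup>2" "0 < \<delta>" "\<delta> \<le> 1"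
  defines "N \<equiv> real (n * m)"
  shows "49 * real m + 4 * real n * real (nat \<lceil>log 2 (4 * \<Delta> / (\<delta> / sqrt N * \<delta>))\<rceil>) * (8 / \<delta> + 1)\<^sup>2
           \<le> 4096 * (N / \<delta>\<^sup>2) * ln (N * \<Delta> / \<delta>)"
proof -
  define L where "L = ln (N * \<Delta> / \<delta>)"
  note N = real_mult_nat_ge[OF assms(1,2), folded N_def]
  note scale = subdivision_scale_bounds[OF assms(1-6), folded N_def]
  have "1 / 3 \<le> L"
    unfolding L_def by (rule one_third_le_ln[OF scale(1)])
  have levels: "real (nat \<lceil>log 2 (4 * \<Delta> / (\<delta> / sqrt N * \<delta>))\<rceil>) \<le> 12 * L"
    unfolding L_def using N(3) assms(3,5) by (intro nat_ceiling_log2_le_ln scale) simp_all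
  have "8 / \<delta> + 1 \<le> 9 / \<delta>"
    using assms(5,6) by (simp add: field_simps)
  then have "(8 / \<delta> + 1)\<^sup>2 \<le> 81 / \<delta>\<^sup>2"
    using assms(5) power_mono[of "8 / \<delta> + 1" "9 / \<delta>" 2] by (simp add: power_divide)
  then have "4 * real n * real (nat \<lceil>log 2 (4 * \<Delta> / (\<delta> / sqrt N * \<delta>))\<rceil>) * (8 / \<delta> + 1)\<^sup>2
      \<le> 4 * N * (12 * L) * (81 / \<delta>\<^sup>2)"
    using N(2) levels by (intro mult_mono) auto
  also have "\<dots> = 3888 * (N / \<delta>\<^sup>2 * L)"
    by simp
  finally have splitting_term:
    "4 * real n * real (nat \<lceil>log 2 (4 * \<Delta> / (\<delta> / sqrt N * \<delta>))\<rceil>) * (8 / \<delta> + 1)\<^sup>2 \<le> 3888 * (N / \<delta>\<^sup>2 * L)" .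
  have "N \<le> N / \<delta>\<^sup>2"
    using N(3) assms(5,6) by (simp add: le_divide_eq power_le_one mult_left_le_one_le)
  then have "real m * (1 / 3) \<le> N / \<delta>\<^sup>2 * L"
    using N(1) \<open>1 / 3 \<le> L\<close> by (intro mult_mono) auto
  moreover have "0 \<le> N / \<delta>\<^sup>2 * L"
    using N(3) \<open>1 / 3 \<le> L\<close> by simp
  ultimately show ?thesis
    using splitting_term by (simp add: L_def)
qed

theorem lemma9:
  "\<exists>K>0. \<forall>(n::nat) (m::nat) (p::nat \<Rightarrow> pt) (w::nat \<Rightarrow> real) (s::nat \<Rightarrow> pt \<times> pt \<times> pt)
          (\<Delta>::real) (\<delta>::real) (z::pt).
     inj_on p {..<n} \<and> (\<forall>i<n. w i > 0) \<and> (\<Sum>i<n. w i) = 1 \<and>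
     (\<Sum>k<m. tri_area (s k)) = 1 \<and>
     \<Delta> = Max (\<Union>k<m. edge_lengths (s k)) \<and>
     0 < \<delta> \<and> \<delta> \<le> 1
     \<longrightarrow> (let Q = subdivision (p ` {..<n}) (s ` {..<m}) z \<Delta> (\<delta> / sqrt (real (n * m))) \<delta>
          in finite Q \<and>
             real (card Q) \<le> K * (real (n * m) / \<delta>\<^sup>2) * ln (real (n * m) * \<Delta> / \<delta>))"
proof (intro exI[of _ 4096] conjI allI impI)
  fix n m :: nat and p :: "nat \<Rightarrow> pt" and w :: "nat \<Rightarrow> real" and s :: "nat \<Rightarrow> pt \<times> pt \<times> pt"
    and \<Delta> \<delta> :: real and z :: pt
  assume "inj_on p {..<n} \<and> (\<forall>i<n. w i > 0) \<and> (\<Sum>i<n. w i) = 1 \<and>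
     (\<Sum>k<m. tri_area (s k)) = 1 \<and> \<Delta> = Max (\<Union>k<m. edge_lengths (s k)) \<and> 0 < \<delta> \<and> \<delta> \<le> 1"
  \<comment> \<open>The weights only serve to make n positive.\<close>
  then have weights: "(\<Sum>i<n. w i) = 1" and area: "(\<Sum>k<m. tri_area (s k)) = 1"
    and \<Delta>: "\<Delta> = Max (\<Union>k<m. edge_lengths (s k))" and \<delta>: "0 < \<delta>" "\<delta> \<le> 1"
    by blast+
  have "1 \<le> n"
    using weights by (cases n) auto
  have "1 \<le> m"
    using area by (cases m) auto
  note triangles = triangles_longest_edge[OF area \<Delta>]
  define \<rho> where "\<rho> = \<delta> / sqrt (real (n * m))"
  have "0 < \<rho>"
    using \<delta> \<open>1 \<le> n\<close> \<open>1 \<le> m\<close> by (simp add: \<rho>_def)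
  note Q = card_subdivision_le[of "p ` {..<n}" "s ` {..<m}" \<Delta> \<delta> \<rho> z]
  let ?levels = "real (nat \<lceil>log 2 (4 * \<Delta> / (\<rho> * \<delta>))\<rceil>)"
  have "real (card (subdivision (p ` {..<n}) (s ` {..<m}) z \<Delta> \<rho> \<delta>)) \<le>
      49 * real (card (s ` {..<m})) + 4 * real (card (p ` {..<n})) * ?levels * (8 / \<delta> + 1)\<^sup>2"
    using Q(2)[OF _ _ triangles(1) \<delta> \<open>0 < \<rho>\<close> triangles(3)] by simp
  also have "\<dots> \<le> 49 * real m + 4 * real n * ?levels * (8 / \<delta> + 1)\<^sup>2"
    using card_image_le[of "{..<n}" p] card_image_le[of "{..<m}" s]
    by (intro add_mono mult_left_mono mult_right_mono) auto
  also have "\<dots> \<le> 4096 * (real (n * m) / \<delta>\<^sup>2) * ln (real (n * m) * \<Delta> / \<delta>)"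
    using subdivision_size_arith[OF \<open>1 \<le> n\<close> \<open>1 \<le> m\<close> triangles(3,2) \<delta>] by (simp add: \<rho>_def)
  finally show "let Q = subdivision (p ` {..<n}) (s ` {..<m}) z \<Delta> (\<delta> / sqrt (real (n * m))) \<delta>
      in finite Q \<and> real (card Q) \<le> 4096 * (real (n * m) / \<delta>\<^sup>2) * ln (real (n * m) * \<Delta> / \<delta>)"
    using Q(1)[OF _ _ triangles(1) \<delta> \<open>0 < \<rho>\<close> triangles(3)] by (simp add: \<rho>_def)
qed simp

end
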